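(* Let $d\ge 1$ and $k\ge d-1$ be integers. Then every injective function $f\colon S^k\to\mathbb{R}^d$ (not assumed continuous) satisfies $\alpha(f)\ge c_{d-1,k}$.
   Context: For a topological space $X$ and a metric space $Y$, the modulus of discontinuity of a function $g\colon X\to Y$ is $\delta(g)=\inf\{\delta\ge 0 : \text{for every } x\in X \text{ there is an open neighborhood } U_x \text{ of } x \text{ with } \operatorname{diam}(g(U_x))\le\delta\}$. The unit sphere $S^{m}$ carries the geodesic (angle) metric $d(u,v)=\arccos\langle u,v\rangle$. For a topological space $X$, $\mathrm{Conf}_2(X)=\{(x,y)\in X\times X: x\neq y\}$ with the subspace topology. For an injective function $f\colon X\to\mathbb{R}^d$, define $\Phi_f\colon \mathrm{Conf}_2(X)\to S^{d-1}$ by $\Phi_f(x,y)=\frac{f(x)-f(y)}{\|f(x)-f(y)\|}$ and $\alpha(f)=\delta(\Phi_f)$. For a metric space $Y$ and $r\ge 0$, the Vietoris–Rips complex $\mathrm{VR}(Y;r)$ is the simplicial complex with vertex set $Y$ whose simplices are the finite subsets of $Y$ of diameter $\le r$ (considered via its geometric realization). For integers $k\ge n\ge 0$, $c_{n,k}=\inf\{r\ge 0: \text{there exists a continuous map } S^k\to\mathrm{VR}(S^n;r) \text{ commuting with the } \mathbb{Z}/2\text{-actions}\}$, where $\mathbb{Z}/2$ acts antipodally on $S^k$ and on $\mathrm{VR}(S^n;r)$ via the simplicial map induced by the antipodal map of $S^n$. *)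

theory Defs
  imports "HOL-Analysis.Analysis"
begin

definition geod :: "'a::real_inner \<Rightarrow> 'a \<Rightarrow> real" where
  "geod u v = arccos (inner u v)"

definition mdiam :: "('b \<Rightarrow> 'b \<Rightarrow> real) \<Rightarrow> 'b set \<Rightarrow> real" where
  "mdiam dist' A = Sup {dist' a b | a b. a \<in> A \<and> b \<in> A}"

definition mod_disc :: "'a topology \<Rightarrow> ('b \<Rightarrow> 'b \<Rightarrow> real) \<Rightarrow> ('a \<Rightarrow> 'b) \<Rightarrow> real" where
  "mod_disc X dist' g = Inf {\<delta>. \<delta> \<ge> 0 \<and>
     (\<forall>x\<in>topspace X. \<exists>U. openin X U \<and> x \<in> U \<and> mdiam dist' (g ` U) \<le> \<delta>)}"

definition Conf2 :: "'a topology \<Rightarrow> ('a \<times> 'a) topology" where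
  "Conf2 X = subtopology (prod_topology X X) {(x, y). x \<noteq> y}"

definition Phi :: "('a \<Rightarrow> 'd::real_normed_vector) \<Rightarrow> 'a \<times> 'a \<Rightarrow> 'd" where
  "Phi f p = (case p of (x, y) \<Rightarrow> (1 / norm (f x - f y)) *\<^sub>R (f x - f y))"

text \<open>alpha(f) for f defined on the unit sphere S^k of 'k (so k = DIM('k) - 1).\<close>
definition alpha :: "('k::euclidean_space \<Rightarrow> 'd::euclidean_space) \<Rightarrow> real" where
  "alpha f = mod_disc (Conf2 (subtopology euclidean (sphere (0::'k) 1))) geod (Phi f)"

text \<open>Vietoris--Rips complex VR(Y;r) (metric dist'), geometric realization with the
  weak (coherent) topology.  Points are finitely supported weight functions.\<close>
definition VR_simplex :: "('b \<Rightarrow> 'b \<Rightarrow> real) \<Rightarrow> 'b set \<Rightarrow> real \<Rightarrow> 'b set \<Rightarrow> bool" where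
  "VR_simplex dist' Y r \<sigma> \<longleftrightarrow> finite \<sigma> \<and> \<sigma> \<noteq> {} \<and> \<sigma> \<subseteq> Y \<and>
      (\<forall>a\<in>\<sigma>. \<forall>b\<in>\<sigma>. dist' a b \<le> r)"

definition closed_simplex :: "'b set \<Rightarrow> ('b \<Rightarrow> real) set" where
  "closed_simplex \<sigma> = {w. (\<forall>y. 0 \<le> w y) \<and> (\<forall>y. y \<notin> \<sigma> \<longrightarrow> w y = 0) \<and> sum w \<sigma> = 1}"

definition VR_carrier :: "('b \<Rightarrow> 'b \<Rightarrow> real) \<Rightarrow> 'b set \<Rightarrow> real \<Rightarrow> ('b \<Rightarrow> real) set" where
  "VR_carrier dist' Y r = \<Union>{closed_simplex \<sigma> | \<sigma>. VR_simplex dist' Y r \<sigma>}"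

definition VR_top :: "('b \<Rightarrow> 'b \<Rightarrow> real) \<Rightarrow> 'b set \<Rightarrow> real \<Rightarrow> ('b \<Rightarrow> real) topology" where
  "VR_top dist' Y r = topology (\<lambda>U. U \<subseteq> VR_carrier dist' Y r \<and>
     (\<forall>\<sigma>. VR_simplex dist' Y r \<sigma> \<longrightarrow>
        openin (subtopology euclidean (closed_simplex \<sigma>)) (U \<inter> closed_simplex \<sigma>)))"

definition c_const :: "'k::euclidean_space itself \<Rightarrow> 'n::euclidean_space itself \<Rightarrow> real" where
  "c_const _ _ = Inf {r. r \<ge> 0 \<and> (\<exists>F. continuous_map (subtopology euclidean (sphere (0::'k) 1))
        (VR_top geod (sphere (0::'n) 1) r) F \<and>
      (\<forall>x\<in>sphere (0::'k) 1. F (- x) = (\<lambda>y. F x (- y))))}"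

end

theory Submission
  imports Defs
begin

text \<open>Let \<delta> be admissible for the modulus of discontinuity of \<open>Phi f\<close>. Restricted to antipodal
  pairs, \<open>g z = Phi f (z, -z)\<close> is an odd map from \<open>S\<^sup>k\<close> to \<open>S\<^sup>d\<^sup>-\<^sup>1\<close> that sends a neighbourhood
  of every point to a set of geodesic diameter at most \<delta>. Choose a finite, antipodally symmetric
  set of centres whose small balls cover \<open>S\<^sup>k\<close>, so small that all centres near a common point have
  \<delta>-close images. The bump functions of these balls form a partition of unity, and sending \<open>z\<close>
  to the convex combination of the vertices \<open>g c\<close> weighted by it is a continuous
  \<open>\<int>/2\<close>-equivariant map \<open>S\<^sup>k \<rightarrow> VR(S\<^sup>d\<^sup>-\<^sup>1; \<delta>)\<close>. Hence \<open>c\<^sub>d\<^sub>-\<^sub>1\<^sub>,\<^sub>k \<le> \<delta>\<close> for every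
  such \<delta>, and so \<open>c\<^sub>d\<^sub>-\<^sub>1\<^sub>,\<^sub>k \<le> \<alpha>(f)\<close>.\<close>

section \<open>The topology of the Vietoris--Rips complex\<close>

lemma istopology_VR:
  "istopology (\<lambda>U. U \<subseteq> VR_carrier dist' Y r \<and>
     (\<forall>\<sigma>. VR_simplex dist' Y r \<sigma> \<longrightarrow>
        openin (top_of_set (closed_simplex \<sigma>)) (U \<inter> closed_simplex \<sigma>)))"
  unfolding istopology_def
proof safe
  fix S T \<sigma>
  assume "S \<subseteq> VR_carrier dist' Y r" "T \<subseteq> VR_carrier dist' Y r"
   "\<forall>\<sigma>. VR_simplex dist' Y r \<sigma> \<longrightarrow> openin (top_of_set (closed_simplex \<sigma>)) (S \<inter> closed_simplex \<sigma>)"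
   "\<forall>\<sigma>. VR_simplex dist' Y r \<sigma> \<longrightarrow> openin (top_of_set (closed_simplex \<sigma>)) (T \<inter> closed_simplex \<sigma>)"
   "VR_simplex dist' Y r \<sigma>"
  then have "openin (top_of_set (closed_simplex \<sigma>)) ((S \<inter> closed_simplex \<sigma>) \<inter> (T \<inter> closed_simplex \<sigma>))"
    by (simp add: openin_Int)
  then show "openin (top_of_set (closed_simplex \<sigma>)) (S \<inter> T \<inter> closed_simplex \<sigma>)"
    by (simp add: Int_ac)
next
  fix K \<sigma>
  assume "\<forall>S\<in>K. S \<subseteq> VR_carrier dist' Y r \<and>
       (\<forall>\<sigma>. VR_simplex dist' Y r \<sigma> \<longrightarrow> openin (top_of_set (closed_simplex \<sigma>)) (S \<inter> closed_simplex \<sigma>))"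
    "VR_simplex dist' Y r \<sigma>"
  then have "openin (top_of_set (closed_simplex \<sigma>)) (\<Union>((\<lambda>S. S \<inter> closed_simplex \<sigma>) ` K))"
    by (intro openin_Union) auto
  moreover have "\<Union>((\<lambda>S. S \<inter> closed_simplex \<sigma>) ` K) = \<Union>K \<inter> closed_simplex \<sigma>" by auto
  ultimately show "openin (top_of_set (closed_simplex \<sigma>)) (\<Union>K \<inter> closed_simplex \<sigma>)" by simp
qed auto

lemma openin_VR_top:
  "openin (VR_top dist' Y r) U \<longleftrightarrow> U \<subseteq> VR_carrier dist' Y r \<and>
     (\<forall>\<sigma>. VR_simplex dist' Y r \<sigma> \<longrightarrow>
        openin (top_of_set (closed_simplex \<sigma>)) (U \<inter> closed_simplex \<sigma>))"
  unfolding VR_top_def by (simp add: topology_inverse'[OF istopology_VR])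

lemma closed_simplex_subset_VR_carrier:
  "VR_simplex dist' Y r \<sigma> \<Longrightarrow> closed_simplex \<sigma> \<subseteq> VR_carrier dist' Y r"
  unfolding VR_carrier_def by blast

lemma topspace_VR_top: "topspace (VR_top dist' Y r) = VR_carrier dist' Y r"
proof
  show "topspace (VR_top dist' Y r) \<subseteq> VR_carrier dist' Y r"
    using openin_VR_top openin_topspace by blast
  have "openin (VR_top dist' Y r) (VR_carrier dist' Y r)"
    unfolding openin_VR_top by (auto simp: Int_absorb1 closed_simplex_subset_VR_carrier)
  then show "VR_carrier dist' Y r \<subseteq> topspace (VR_top dist' Y r)"
    by (rule openin_subset)
qed

lemma closed_closed_simplex: "closed (closed_simplex \<sigma>)"
proof -
  have "closed_simplex \<sigma> = (\<Inter>y. {w. 0 \<le> w y}) \<inter> (\<Inter>y\<in>-\<sigma>. {w. w y = 0}) \<inter> {w. sum w \<sigma> = 1}"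
    unfolding closed_simplex_def by auto
  moreover have "closed {w::'a \<Rightarrow> real. 0 \<le> w y}" for y
    by (intro closed_Collect_le continuous_intros continuous_on_product_coordinates)
  moreover have "closed {w::'a \<Rightarrow> real. w y = 0}" for y
    by (intro closed_Collect_eq continuous_intros continuous_on_product_coordinates)
  moreover have "closed {w::'a \<Rightarrow> real. sum w \<sigma> = 1}"
  proof (cases "finite \<sigma>")
    case True
    have "continuous_on UNIV (\<lambda>w::'a \<Rightarrow> real. sum w \<sigma>)"
      by (rule continuous_on_sum) simp
    from closed_Collect_eq[OF this continuous_on_const] show ?thesis by simp
  qed simp
  ultimately show ?thesis by (auto intro!: closed_Int closed_INT)
qed

lemma closedin_VR_top_imp_closed_Int_closed_simplex:
  assumes "closedin (VR_top dist' Y r) C" and "VR_simplex dist' Y r \<sigma>"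
  shows "closed (C \<inter> closed_simplex \<sigma>)"
proof -
  have "openin (VR_top dist' Y r) (VR_carrier dist' Y r - C)"
    using assms(1) unfolding closedin_def topspace_VR_top by auto
  then have "openin (top_of_set (closed_simplex \<sigma>)) ((VR_carrier dist' Y r - C) \<inter> closed_simplex \<sigma>)"
    using assms(2) unfolding openin_VR_top by blast
  moreover have "(VR_carrier dist' Y r - C) \<inter> closed_simplex \<sigma> = closed_simplex \<sigma> - C \<inter> closed_simplex \<sigma>"
    using closed_simplex_subset_VR_carrier[OF assms(2)] by blast
  ultimately have "closedin (top_of_set (closed_simplex \<sigma>)) (C \<inter> closed_simplex \<sigma>)"
    by (simp add: closedin_def)
  then show ?thesis
    using closed_closed_simplex closedin_closed_trans by blast
qed

lemma continuous_map_VR_top_finite: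
  fixes F :: "'a::topological_space \<Rightarrow> 'b \<Rightarrow> real"
  assumes cont: "continuous_on S F" and "finite Y\<^sub>0"
    and simplex: "\<And>z. z \<in> S \<Longrightarrow> \<exists>\<sigma>. \<sigma> \<subseteq> Y\<^sub>0 \<and> VR_simplex dist' Y r \<sigma> \<and> F z \<in> closed_simplex \<sigma>"
  shows "continuous_map (top_of_set S) (VR_top dist' Y r) F"
  unfolding continuous_map_closedin
proof (intro conjI allI impI Pi_I)
  fix z
  assume "z \<in> topspace (top_of_set S)"
  then obtain \<sigma> where "VR_simplex dist' Y r \<sigma>" "F z \<in> closed_simplex \<sigma>"
    using simplex by auto
  then show "F z \<in> topspace (VR_top dist' Y r)"
    unfolding topspace_VR_top VR_carrier_def by blast
next
  fix C
  assume C: "closedin (VR_top dist' Y r) C"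
  let ?\<Sigma> = "{\<sigma>. \<sigma> \<subseteq> Y\<^sub>0 \<and> VR_simplex dist' Y r \<sigma>}"
  have "finite ?\<Sigma>"
    using \<open>finite Y\<^sub>0\<close> by (auto intro: finite_subset[of _ "Pow Y\<^sub>0"])
  have piece: "closedin (top_of_set S) (S \<inter> F -` (C \<inter> closed_simplex \<sigma>))" if "\<sigma> \<in> ?\<Sigma>" for \<sigma>
    using that closedin_VR_top_imp_closed_Int_closed_simplex[OF C]
    by (intro continuous_closedin_preimage[OF cont]) blast
  have "{x \<in> topspace (top_of_set S). F x \<in> C} = (\<Union>\<sigma>\<in>?\<Sigma>. S \<inter> F -` (C \<inter> closed_simplex \<sigma>))"
    using simplex by fastforce
  also have "closedin (top_of_set S) \<dots>"
    by (intro closedin_Union finite_imageI \<open>finite ?\<Sigma>\<close>) (use piece in blast)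
  finally show "closedin (top_of_set S) {x \<in> topspace (top_of_set S). F x \<in> C}" .
qed

section \<open>Equivariant maps into the Vietoris--Rips complex\<close>

text \<open>The barycentric coordinates of \<open>z\<close> with respect to the vertices \<open>g c\<close>, taken from the
  partition of unity given by the bumps \<open>max 0 (e - dist z c)\<close>; centres with the same image
  pool their weights.\<close>

definition nerve_map :: "'a::metric_space set \<Rightarrow> real \<Rightarrow> ('a \<Rightarrow> 'b) \<Rightarrow> 'a \<Rightarrow> 'b \<Rightarrow> real" where
  "nerve_map C e g z y =
     (\<Sum>c\<in>C. if g c = y then max 0 (e - dist z c) else 0) / (\<Sum>c\<in>C. max 0 (e - dist z c))"

lemma sum_bump_pos:
  assumes "finite C" "c \<in> C" "dist z c < e"
  shows "0 < (\<Sum>c\<in>C. max 0 (e - dist z c))"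
proof -
  have "0 < max 0 (e - dist z c)" using assms(3) by simp
  also have "\<dots> \<le> (\<Sum>c\<in>C. max 0 (e - dist z c))"
    by (rule member_le_sum) (use assms in auto)
  finally show ?thesis .
qed

lemma nerve_map_in_closed_simplex:
  assumes "finite C" "c \<in> C" "dist z c < e"
  shows "nerve_map C e g z \<in> closed_simplex (g ` {c \<in> C. dist z c < e})"
proof -
  let ?\<sigma> = "g ` {c \<in> C. dist z c < e}"
  let ?s = "\<Sum>c\<in>C. max 0 (e - dist z c)"
  have s: "0 < ?s" by (rule sum_bump_pos[OF assms])
  have vanish: "(if g c = y then max 0 (e - dist z c) else 0) = 0" if "y \<notin> ?\<sigma>" "c \<in> C" for c y
    using that by auto
  have "sum (nerve_map C e g z) ?\<sigma> = (\<Sum>y\<in>?\<sigma>. \<Sum>c\<in>C. if g c = y then max 0 (e - dist z c) else 0) / ?s"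
    unfolding nerve_map_def by (simp add: sum_divide_distrib)
  also have "\<dots> = (\<Sum>c\<in>C. \<Sum>y\<in>?\<sigma>. if g c = y then max 0 (e - dist z c) else 0) / ?s"
    by (subst sum.swap) simp
  also have "\<dots> = (\<Sum>c\<in>C. if g c \<in> ?\<sigma> then max 0 (e - dist z c) else 0) / ?s"
    using \<open>finite C\<close> by simp
  also have "\<dots> = ?s / ?s"
    by (intro arg_cong2[where f = "(/)"] sum.cong) auto
  also have "\<dots> = 1" using s by simp
  finally have "sum (nerve_map C e g z) ?\<sigma> = 1" .
  moreover have "0 \<le> nerve_map C e g z y" for y
    unfolding nerve_map_def using s by (auto intro!: divide_nonneg_pos sum_nonneg)
  moreover have "nerve_map C e g z y = 0" if "y \<notin> ?\<sigma>" for y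
    unfolding nerve_map_def using vanish[OF that] by simp
  ultimately show ?thesis
    unfolding closed_simplex_def by blast
qed

lemma continuous_on_nerve_map:
  assumes "finite C" and cover: "\<And>z. z \<in> S \<Longrightarrow> \<exists>c\<in>C. dist z c < e"
  shows "continuous_on S (nerve_map C e g)"
proof (rule continuous_on_coordinatewise_then_product)
  fix y
  have "continuous_on S (\<lambda>z. if g c = y then max 0 (e - dist z c) else 0)" for c
    by (cases "g c = y") (auto intro!: continuous_intros)
  moreover have "\<forall>z\<in>S. (\<Sum>c\<in>C. max 0 (e - dist z c)) \<noteq> 0"
    using cover sum_bump_pos[OF \<open>finite C\<close>] by (metis less_irrefl)
  ultimately show "continuous_on S (\<lambda>z. nerve_map C e g z y)"
    unfolding nerve_map_def by (intro continuous_intros) auto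
qed

lemma nerve_map_uminus:
  fixes g :: "'a::real_normed_vector \<Rightarrow> 'b::group_add"
  assumes sym: "\<And>c. c \<in> C \<Longrightarrow> - c \<in> C" and odd: "\<And>c. c \<in> C \<Longrightarrow> g (- c) = - g c"
  shows "nerve_map C e g (- z) y = nerve_map C e g z (- y)"
proof -
  have reflect: "(\<Sum>c\<in>C. h c) = (\<Sum>c\<in>C. h (- c))" for h :: "'a \<Rightarrow> real"
    by (rule sum.reindex_bij_witness[of _ uminus uminus]) (auto simp: sym)
  have "dist (- z) (- c) = dist z c" for c
    by (simp add: dist_minus)
  then show ?thesis
    unfolding nerve_map_def
    by (subst (1 2) reflect) (auto simp: odd minus_equation_iff intro!: arg_cong2[where f = "(/)"] sum.cong)
qed

lemma obtain_symmetric_net_subordinate: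
  fixes S :: "'a::real_normed_vector set"
  assumes "compact S" and sym: "\<And>x. x \<in> S \<Longrightarrow> - x \<in> S"
    and small: "\<And>x. x \<in> S \<Longrightarrow> \<exists>T. open T \<and> x \<in> T \<and> (\<forall>a\<in>T \<inter> S. \<forall>b\<in>T \<inter> S. R a b)"
  obtains e C where "0 < e" "finite C" "C \<subseteq> S" "\<And>c. c \<in> C \<Longrightarrow> - c \<in> C"
    "\<And>z. z \<in> S \<Longrightarrow> \<exists>c\<in>C. dist z c < e"
    "\<And>z a b. \<lbrakk>z \<in> S; a \<in> C; b \<in> C; dist z a < e; dist z b < e\<rbrakk> \<Longrightarrow> R a b"
proof -
  obtain T where T: "\<And>x. x \<in> S \<Longrightarrow> open (T x) \<and> x \<in> T x \<and> (\<forall>a\<in>T x \<inter> S. \<forall>b\<in>T x \<inter> S. R a b)"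
    using small by metis
  have "S \<subseteq> \<Union>(T ` S)" using T by blast
  then obtain e where "0 < e" and lebesgue: "\<And>x. x \<in> S \<Longrightarrow> \<exists>G \<in> T ` S. ball x e \<subseteq> G"
    by (rule Heine_Borel_lemma[OF \<open>compact S\<close>]) (use T in auto)
  have "S \<subseteq> (\<Union>c\<in>S. ball c e)" using \<open>0 < e\<close> by force
  then obtain C\<^sub>0 where C\<^sub>0: "C\<^sub>0 \<subseteq> S" "finite C\<^sub>0" "S \<subseteq> (\<Union>c\<in>C\<^sub>0. ball c e)"
    using compactE_image[OF \<open>compact S\<close>, of S "\<lambda>c. ball c e"] by blast
  define C where "C = C\<^sub>0 \<union> uminus ` C\<^sub>0"
  show thesis
  proof
    show "finite C" "C \<subseteq> S" "\<And>c. c \<in> C \<Longrightarrow> - c \<in> C"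
      using C\<^sub>0 sym by (auto simp: C_def)
    show "\<exists>c\<in>C. dist z c < e" if "z \<in> S" for z
      using C\<^sub>0(3) that by (force simp: C_def dist_commute)
    show "R a b" if "z \<in> S" "a \<in> C" "b \<in> C" "dist z a < e" "dist z b < e" for z a b
    proof -
      obtain x where "x \<in> S" "ball z e \<subseteq> T x" using lebesgue[OF \<open>z \<in> S\<close>] by blast
      then have "a \<in> T x \<inter> S" "b \<in> T x \<inter> S"
        using that \<open>C \<subseteq> S\<close> by auto
      with T[OF \<open>x \<in> S\<close>] show ?thesis by blast
    qed
  qed fact
qed

lemma exists_equivariant_map_VR:
  fixes g :: "'a::real_normed_vector \<Rightarrow> 'b::group_add"
  assumes "compact S" and sym: "\<And>x. x \<in> S \<Longrightarrow> - x \<in> S"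
    and odd: "\<And>x. x \<in> S \<Longrightarrow> g (- x) = - g x" and "g ` S \<subseteq> Y"
    and small: "\<And>x. x \<in> S \<Longrightarrow>
      \<exists>T. open T \<and> x \<in> T \<and> (\<forall>a\<in>T \<inter> S. \<forall>b\<in>T \<inter> S. dist' (g a) (g b) \<le> \<delta>)"
  shows "\<exists>F. continuous_map (top_of_set S) (VR_top dist' Y \<delta>) F \<and> (\<forall>x\<in>S. F (- x) = (\<lambda>y. F x (- y)))"
proof (rule obtain_symmetric_net_subordinate[OF \<open>compact S\<close> sym small])
  fix e C
  assume "finite C" "C \<subseteq> S" and symC: "\<And>c. c \<in> C \<Longrightarrow> - c \<in> C"
    and cover: "\<And>z. z \<in> S \<Longrightarrow> \<exists>c\<in>C. dist z c < e"
    and close: "\<And>z a b. \<lbrakk>z \<in> S; a \<in> C; b \<in> C; dist z a < e; dist z b < e\<rbrakk> \<Longrightarrow> dist' (g a) (g b) \<le> \<delta>"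
  have simplex: "\<exists>\<sigma>. \<sigma> \<subseteq> g ` C \<and> VR_simplex dist' Y \<delta> \<sigma> \<and> nerve_map C e g z \<in> closed_simplex \<sigma>"
    if "z \<in> S" for z
  proof (intro exI conjI)
    let ?\<sigma> = "g ` {c \<in> C. dist z c < e}"
    obtain c where "c \<in> C" "dist z c < e" using cover[OF \<open>z \<in> S\<close>] by blast
    then show "nerve_map C e g z \<in> closed_simplex ?\<sigma>"
      by (rule nerve_map_in_closed_simplex[OF \<open>finite C\<close>])
    show "VR_simplex dist' Y \<delta> ?\<sigma>"
      unfolding VR_simplex_def
    proof (intro conjI ballI)
      show "finite ?\<sigma>" using \<open>finite C\<close> by simp
      show "?\<sigma> \<noteq> {}" using \<open>c \<in> C\<close> \<open>dist z c < e\<close> by blast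
      show "?\<sigma> \<subseteq> Y" using \<open>C \<subseteq> S\<close> \<open>g ` S \<subseteq> Y\<close> by blast
      show "dist' a b \<le> \<delta>" if "a \<in> ?\<sigma>" "b \<in> ?\<sigma>" for a b
        using that close[OF \<open>z \<in> S\<close>] by blast
    qed
    show "?\<sigma> \<subseteq> g ` C" by blast
  qed
  show ?thesis
  proof (intro exI conjI ballI ext)
    show "continuous_map (top_of_set S) (VR_top dist' Y \<delta>) (nerve_map C e g)"
    proof (rule continuous_map_VR_top_finite[where Y\<^sub>0 = "g ` C"])
      show "continuous_on S (nerve_map C e g)"
        using \<open>finite C\<close> cover by (rule continuous_on_nerve_map)
    qed (use \<open>finite C\<close> simplex in auto)
    show "nerve_map C e g (- x) y = nerve_map C e g x (- y)" for x y
      using symC odd \<open>C \<subseteq> S\<close> by (intro nerve_map_uminus) auto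
  qed
qed

section \<open>Directions of chords\<close>

lemma geod_bounds:
  fixes a b :: "'a::real_inner"
  assumes "norm a = 1" "norm b = 1"
  shows "0 \<le> geod a b" "geod a b \<le> pi"
proof -
  have "\<bar>inner a b\<bar> \<le> 1" using Cauchy_Schwarz_ineq2[of a b] assms by simp
  then show "0 \<le> geod a b" "geod a b \<le> pi"
    unfolding geod_def by (auto intro: arccos_lbound arccos_ubound)
qed

lemma geod_le_mdiam:
  assumes "A \<subseteq> sphere 0 1" "a \<in> A" "b \<in> A"
  shows "geod a b \<le> mdiam geod A"
  unfolding mdiam_def
proof (rule cSup_upper)
  show "bdd_above {geod a b |a b. a \<in> A \<and> b \<in> A}"
    by (rule bdd_aboveI[where M = pi]) (use assms(1) geod_bounds in fastforce)
qed (use assms in blast)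

lemma mdiam_geod_le_pi:
  assumes "A \<subseteq> sphere 0 1" "A \<noteq> {}"
  shows "mdiam geod A \<le> pi"
  unfolding mdiam_def by (rule cSup_least) (use assms geod_bounds in fastforce)+

lemma topspace_Conf2:
  "topspace (Conf2 X) = {(x, y). x \<in> topspace X \<and> y \<in> topspace X \<and> x \<noteq> y}"
  unfolding Conf2_def by auto

lemma Phi_swap: "Phi f (y, x) = - Phi f (x, y)"
  unfolding Phi_def by (simp add: norm_minus_commute flip: scaleR_minus_right)

lemma Phi_Conf2_in_sphere:
  assumes "inj_on f (topspace X)" "p \<in> topspace (Conf2 X)"
  shows "Phi f p \<in> sphere 0 1"
proof -
  obtain x y where "p = (x, y)" "x \<in> topspace X" "y \<in> topspace X" "x \<noteq> y"
    using assms(2) by (auto simp: topspace_Conf2)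
  with assms(1) have "f x \<noteq> f y" by (meson inj_onD)
  with \<open>p = (x, y)\<close> show ?thesis by (simp add: Phi_def)
qed

lemma continuous_map_antipodal_Conf2:
  fixes S :: "'a::real_normed_vector set"
  assumes "0 \<notin> S" "\<And>x. x \<in> S \<Longrightarrow> - x \<in> S"
  shows "continuous_map (top_of_set S) (Conf2 (top_of_set S)) (\<lambda>z. (z, - z))"
  unfolding Conf2_def continuous_map_in_subtopology
proof
  show "continuous_map (top_of_set S) (prod_topology (top_of_set S) (top_of_set S)) (\<lambda>z. (z, - z))"
    using assms(2) by (auto simp: continuous_map_paired intro!: continuous_intros)
  have "z \<noteq> - z" if "z \<in> S" for z
  proof
    assume "z = - z"
    then have "(2::real) *\<^sub>R z = 0" by (metis scaleR_2 add.right_inverse)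
    with assms(1) that show False by simp
  qed
  then show "(\<lambda>z. (z, - z)) \<in> topspace (top_of_set S) \<rightarrow> {(x, y). x \<noteq> y}"
    by auto
qed

definition discontinuity_bound :: "'a topology \<Rightarrow> ('b \<Rightarrow> 'b \<Rightarrow> real) \<Rightarrow> ('a \<Rightarrow> 'b) \<Rightarrow> real \<Rightarrow> bool" where
  "discontinuity_bound X dist' g \<delta> \<longleftrightarrow>
     \<delta> \<ge> 0 \<and> (\<forall>x\<in>topspace X. \<exists>U. openin X U \<and> x \<in> U \<and> mdiam dist' (g ` U) \<le> \<delta>)"

lemma mod_disc_greatest:
  assumes "discontinuity_bound X dist' g \<delta>\<^sub>0"
    and "\<And>\<delta>. discontinuity_bound X dist' g \<delta> \<Longrightarrow> c \<le> \<delta>"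
  shows "c \<le> mod_disc X dist' g"
  using assms unfolding mod_disc_def discontinuity_bound_def by (intro cInf_greatest) blast+

lemma discontinuity_bound_Phi_pi:
  fixes f :: "'a \<Rightarrow> 'b::real_inner"
  assumes "inj_on f (topspace X)"
  shows "discontinuity_bound (Conf2 X) geod (Phi f) pi"
  unfolding discontinuity_bound_def
proof (intro conjI ballI exI[of _ "topspace (Conf2 X)"])
  have "Phi f ` topspace (Conf2 X) \<subseteq> sphere 0 1"
    using Phi_Conf2_in_sphere[OF assms] by blast
  then show "mdiam geod (Phi f ` topspace (Conf2 X)) \<le> pi" if "p \<in> topspace (Conf2 X)" for p
    using that by (intro mdiam_geod_le_pi) blast+
qed auto

lemma antipodal_Phi_locally_small:
  fixes f :: "'a::real_normed_vector \<Rightarrow> 'b::real_inner"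
  assumes "0 \<notin> S" "\<And>x. x \<in> S \<Longrightarrow> - x \<in> S" "inj_on f S" "x \<in> S"
    and "discontinuity_bound (Conf2 (top_of_set S)) geod (Phi f) \<delta>"
  shows "\<exists>T. open T \<and> x \<in> T \<and>
    (\<forall>a\<in>T \<inter> S. \<forall>b\<in>T \<inter> S. geod (Phi f (a, - a)) (Phi f (b, - b)) \<le> \<delta>)"
proof -
  let ?X = "Conf2 (top_of_set S)"
  have antipodal: "continuous_map (top_of_set S) ?X (\<lambda>z. (z, - z))"
    by (rule continuous_map_antipodal_Conf2[OF assms(1,2)])
  then have "(x, - x) \<in> topspace ?X"
    using \<open>x \<in> S\<close> continuous_map_image_subset_topspace by fastforce
  then obtain U where U: "openin ?X U" "(x, - x) \<in> U" "mdiam geod (Phi f ` U) \<le> \<delta>"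
    using assms(5) unfolding discontinuity_bound_def by blast
  have "openin (top_of_set S) {z \<in> topspace (top_of_set S). (z, - z) \<in> U}"
    by (rule openin_continuous_map_preimage[OF antipodal U(1)])
  then obtain T where "open T" and T: "{z \<in> S. (z, - z) \<in> U} = S \<inter> T"
    unfolding openin_open by auto
  have sphere: "Phi f ` U \<subseteq> sphere 0 1"
    using openin_subset[OF U(1)] Phi_Conf2_in_sphere[of f "top_of_set S"] \<open>inj_on f S\<close> by auto
  have "geod (Phi f (a, - a)) (Phi f (b, - b)) \<le> \<delta>" if "a \<in> T \<inter> S" "b \<in> T \<inter> S" for a b
  proof -
    have "(a, - a) \<in> U" "(b, - b) \<in> U" using that T by blast+
    then have "geod (Phi f (a, - a)) (Phi f (b, - b)) \<le> mdiam geod (Phi f ` U)"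
      by (intro geod_le_mdiam[OF sphere]) auto
    also have "\<dots> \<le> \<delta>" by (rule U(3))
    finally show ?thesis .
  qed
  moreover have "x \<in> T" using T \<open>x \<in> S\<close> U(2) by blast
  ultimately show ?thesis using \<open>open T\<close> by blast
qed

lemma c_const_le:
  assumes "\<delta> \<ge> 0" "continuous_map (top_of_set (sphere (0::'k::euclidean_space) 1))
      (VR_top geod (sphere (0::'n::euclidean_space) 1) \<delta>) F"
    and "\<forall>x\<in>sphere 0 1. F (- x) = (\<lambda>y. F x (- y))"
  shows "c_const TYPE('k) TYPE('n) \<le> \<delta>"
  unfolding c_const_def by (rule cInf_lower) (use assms in \<open>auto intro!: bdd_belowI[where m = 0]\<close>)

lemma c_const_le_discontinuity_bound:
  fixes f :: "'k::euclidean_space \<Rightarrow> 'd::euclidean_space"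
  assumes inj: "inj_on f (sphere 0 1)"
    and bound: "discontinuity_bound (Conf2 (top_of_set (sphere 0 1))) geod (Phi f) \<delta>"
  shows "c_const TYPE('k) TYPE('d) \<le> \<delta>"
proof -
  let ?S = "sphere (0::'k) 1"
  let ?X = "Conf2 (top_of_set ?S)"
  have "\<exists>F. continuous_map (top_of_set ?S) (VR_top geod (sphere (0::'d) 1) \<delta>) F \<and>
      (\<forall>x\<in>?S. F (- x) = (\<lambda>y. F x (- y)))"
  proof (rule exists_equivariant_map_VR[where g = "\<lambda>z. Phi f (z, - z)"])
    show "Phi f (- x, - (- x)) = - Phi f (x, - x)" for x
      unfolding minus_minus by (rule Phi_swap)
    have "(\<lambda>z. (z, - z)) ` ?S \<subseteq> topspace ?X"
      using continuous_map_image_subset_topspace[OF continuous_map_antipodal_Conf2[of ?S]] by simp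
    then show "(\<lambda>z. Phi f (z, - z)) ` ?S \<subseteq> sphere 0 1"
      using Phi_Conf2_in_sphere[of f "top_of_set ?S"] inj by auto
    show "\<exists>T. open T \<and> x \<in> T \<and>
        (\<forall>a\<in>T \<inter> ?S. \<forall>b\<in>T \<inter> ?S. geod (Phi f (a, - a)) (Phi f (b, - b)) \<le> \<delta>)"
      if "x \<in> ?S" for x
      using inj that bound by (intro antipodal_Phi_locally_small) auto
  qed (auto simp: compact_sphere)
  moreover have "\<delta> \<ge> 0"
    using bound by (simp add: discontinuity_bound_def)
  ultimately show ?thesis
    using c_const_le by blast
qed

text \<open>The hypothesis \<open>DIM('d) \<le> DIM('k)\<close>, i.e.\ \<open>k \<ge> d - 1\<close>, only serves to make
  \<open>c\<^sub>d\<^sub>-\<^sub>1\<^sub>,\<^sub>k\<close> meaningful; the proof does not use it.\<close>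

theorem theorem1p2:
  fixes f :: "'k::euclidean_space \<Rightarrow> 'd::euclidean_space"
  assumes "DIM('d) \<le> DIM('k)"
    and "inj_on f (sphere 0 1)"
  shows "alpha f \<ge> c_const TYPE('k) TYPE('d)"
  unfolding alpha_def
proof (rule mod_disc_greatest)
  show "discontinuity_bound (Conf2 (top_of_set (sphere 0 1))) geod (Phi f) pi"
    using assms(2) by (intro discontinuity_bound_Phi_pi) simp
  show "c_const TYPE('k) TYPE('d) \<le> \<delta>"
    if "discontinuity_bound (Conf2 (top_of_set (sphere 0 1))) geod (Phi f) \<delta>" for \<delta>
    using assms(2) that by (rule c_const_le_discontinuity_bound)
qed

end
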